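(* There are universal constants $c>0$ and $T_0$ such that for every $T \ge T_0$ there is a (randomized, adaptive) adversary strategy for the $T$-step sequential binary prediction game such that every forecasting algorithm incurs $\mathbb{E}[\mathsf{CalDist}(x,p)] \ge c\,T^{1/3}$, where $x$ is the sequence of outcomes and $p$ the sequence of predictions.
   Context: Sequential binary prediction game with horizon $T$: at each step $t \in [T]$, the adversary picks a bit $x_t \in \{0,1\}$ and simultaneously the forecaster picks a prediction $p_t \in [0,1]$; both may depend on all previous outcomes and predictions (and on their own randomness); then $x_t,p_t$ are revealed to both. For $x \in \{0,1\}^T$, let $\mathcal{C}(x) = \{q \in [0,1]^T : \sum_{t=1}^T (x_t - q_t)\mathbf{1}[q_t = \alpha] = 0 \text{ for all } \alpha \in [0,1]\}$, and $\mathsf{CalDist}(x,p) = \min_{q \in \mathcal{C}(x)} \|p - q\|_1$. The expectation is over the randomness of both players. *)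

theory Defs
  imports "HOL-Probability.Probability"
begin

text \<open>Sequences of length T are functions on nat, indexed by t < T (i.e. steps 0..T-1).
  Outcomes are bits (bool, with of_bool giving 0/1).\<close>

definition cal_set :: "nat \<Rightarrow> (nat \<Rightarrow> bool) \<Rightarrow> (nat \<Rightarrow> real) set" where
  "cal_set T x = {q. (\<forall>t<T. 0 \<le> q t \<and> q t \<le> 1) \<and>
      (\<forall>\<alpha>::real. (\<Sum>t<T. (of_bool (x t) - q t) * of_bool (q t = \<alpha>)) = 0)}"

definition CalDist :: "nat \<Rightarrow> (nat \<Rightarrow> bool) \<Rightarrow> (nat \<Rightarrow> real) \<Rightarrow> real" where
  "CalDist T x p = Inf {(\<Sum>t<T. \<bar>p t - q t\<bar>) | q. q \<in> cal_set T x}"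

text \<open>A history is the list of revealed pairs (x_s, p_s) for s < t.
  An adversary (behavioural randomized strategy) maps a history to the probability
  that the next bit is 1.  A deterministic forecaster maps a history to a prediction.
  A randomized forecaster is a family of deterministic forecasters indexed by a random
  seed (drawn once, independently of the adversary's coins).\<close>
type_synonym history = "(bool \<times> real) list"

fun play :: "(history \<Rightarrow> real) \<Rightarrow> (history \<Rightarrow> real) \<Rightarrow> nat \<Rightarrow> history pmf" where
  "play A F 0 = return_pmf []"
| "play A F (Suc n) = play A F n \<bind>
     (\<lambda>h. map_pmf (\<lambda>b. h @ [(b, F h)]) (bernoulli_pmf (A h)))"

definition expected_caldist :: "(history \<Rightarrow> real) \<Rightarrow> (history \<Rightarrow> real) \<Rightarrow> nat \<Rightarrow> real" where
  "expected_caldist A F T =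
     measure_pmf.expectation (play A F T)
       (\<lambda>h. CalDist T (\<lambda>t. fst (h ! t)) (\<lambda>t. snd (h ! t)))"

end

theory Submission
  imports Defs
begin

(* The adversary tosses fair coins while the running bias S_t = sum_{s<t} (x_s - p_s) stays in
   (-K, K), K = T^(1/3), and afterwards always plays the bit that increases |S|.  Calibration
   gives two lower bounds for CalDist: |S_T|, and (2/3) sum (1/2 - p)(x - p).  The first is at
   least K unless the bias stays in the band.  Under fair coins
   E sum (1/2 - p)(x - p) >= V - E|S_T|/2 with V = E sum (1/2 - p)^2.  If the bias stays in the band with
   probability close to 1, optional stopping for S^2 bounds the expected compensator
   sum (1/4 + 2 S (1/2 - p) + (1/2 - p)^2) by (K + 1)^2, and since 2 S (1/2 - p) is at least
   -(1/8 + 8 K^2 (1/2 - p)^2) this forces V to be of order T/K^2 = K. *)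

section \<open>Lower bounds for the calibration distance\<close>

lemma cal_set_weighted_sum_eq_0:
  assumes "q \<in> cal_set T x"
  shows "(\<Sum>t<T. (of_bool (x t) - q t) * f (q t)) = 0"
proof -
  define Q where "Q = q ` {..<T}"
  have cal: "(\<Sum>t<T. (of_bool (x t) - q t) * of_bool (q t = \<alpha>)) = 0" for \<alpha>
    using assms by (simp add: cal_set_def)
  have "(\<Sum>t<T. (of_bool (x t) - q t) * f (q t)) =
        (\<Sum>t<T. \<Sum>\<alpha>\<in>Q. (of_bool (x t) - q t) * of_bool (q t = \<alpha>) * f \<alpha>)"
  proof (rule sum.cong[OF refl])
    fix t assume "t \<in> {..<T}"
    then have "q t \<in> Q"
      by (simp add: Q_def)
    then have "(\<Sum>\<alpha>\<in>Q. (of_bool (x t) - q t) * of_bool (q t = \<alpha>) * f \<alpha>) =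
        (\<Sum>\<alpha>\<in>Q. if \<alpha> = q t then (of_bool (x t) - q t) * f \<alpha> else 0)"
      by (intro sum.cong refl) auto
    also have "\<dots> = (of_bool (x t) - q t) * f (q t)"
      using \<open>q t \<in> Q\<close> by (simp add: Q_def sum.delta)
    finally show "(of_bool (x t) - q t) * f (q t) =
        (\<Sum>\<alpha>\<in>Q. (of_bool (x t) - q t) * of_bool (q t = \<alpha>) * f \<alpha>)"
      by simp
  qed
  also have "\<dots> = (\<Sum>\<alpha>\<in>Q. f \<alpha> * (\<Sum>t<T. (of_bool (x t) - q t) * of_bool (q t = \<alpha>)))"
    by (subst sum.swap) (simp only: sum_distrib_left mult.commute mult.left_commute mult.assoc)
  also have "\<dots> = 0"
    using cal by simp
  finally show ?thesis .
qed

lemma CalDist_greatest: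
  assumes "\<And>q. q \<in> cal_set T x \<Longrightarrow> B \<le> (\<Sum>t<T. \<bar>p t - q t\<bar>)"
  shows "B \<le> CalDist T x p"
proof -
  have "(\<lambda>t. of_bool (x t)) \<in> cal_set T x"
    by (simp add: cal_set_def)
  then show ?thesis
    unfolding CalDist_def by (intro cInf_greatest) (use assms in auto)
qed

lemma abs_sum_bias_le_CalDist: "\<bar>\<Sum>t<T. of_bool (x t) - p t\<bar> \<le> CalDist T x p"
proof (rule CalDist_greatest)
  fix q assume "q \<in> cal_set T x"
  then have "(\<Sum>t<T. (of_bool (x t) - q t) * 1) = 0"
    by (rule cal_set_weighted_sum_eq_0)
  then have "\<bar>\<Sum>t<T. of_bool (x t) - p t\<bar> = \<bar>\<Sum>t<T. q t - p t\<bar>"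
    by (simp add: sum_subtractf)
  also have "\<dots> \<le> (\<Sum>t<T. \<bar>q t - p t\<bar>)"
    by (rule sum_abs)
  also have "\<dots> = (\<Sum>t<T. \<bar>p t - q t\<bar>)"
    by (simp add: abs_minus_commute)
  finally show "\<bar>\<Sum>t<T. of_bool (x t) - p t\<bar> \<le> (\<Sum>t<T. \<bar>p t - q t\<bar>)" .
qed

lemma weighted_sum_bias_le_CalDist:
  assumes p: "\<And>t. t < T \<Longrightarrow> 0 \<le> p t \<and> p t \<le> 1"
  shows "(2/3) * (\<Sum>t<T. (1/2 - p t) * (of_bool (x t) - p t)) \<le> CalDist T x p"
proof (rule CalDist_greatest)
  fix q assume q: "q \<in> cal_set T x"
  have calibrated: "(\<Sum>t<T. (of_bool (x t) - q t) * (1/2 - q t)) = 0"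
    using q by (rule cal_set_weighted_sum_eq_0)
  have "(1/2 - p t) * (of_bool (x t) - p t)
      \<le> (of_bool (x t) - q t) * (1/2 - q t) + 3/2 * \<bar>p t - q t\<bar>" if "t < T" for t
  proof -
    have "0 \<le> q t" "q t \<le> 1"
      using q that by (auto simp: cal_set_def)
    then have bounded: "\<bar>1/2 + of_bool (x t) - q t - p t\<bar> \<le> 3/2"
      using p[OF that] by (cases "x t") (auto split: abs_split)
    have "(q t - p t) * (1/2 + of_bool (x t) - q t - p t)
        \<le> \<bar>q t - p t\<bar> * \<bar>1/2 + of_bool (x t) - q t - p t\<bar>"
      by (metis abs_ge_self abs_mult)
    also have "\<dots> \<le> \<bar>p t - q t\<bar> * (3/2)"
      using bounded by (subst abs_minus_commute) (rule mult_left_mono, simp_all)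
    moreover have "(1/2 - p t) * (of_bool (x t) - p t) = (of_bool (x t) - q t) * (1/2 - q t)
        + (q t - p t) * (1/2 + of_bool (x t) - q t - p t)"
      by (simp add: field_simps)
    ultimately show ?thesis
      by linarith
  qed
  then have "(\<Sum>t<T. (1/2 - p t) * (of_bool (x t) - p t))
      \<le> (\<Sum>t<T. (of_bool (x t) - q t) * (1/2 - q t) + 3/2 * \<bar>p t - q t\<bar>)"
    by (intro sum_mono) auto
  also have "\<dots> = 3/2 * (\<Sum>t<T. \<bar>p t - q t\<bar>)"
    using calibrated by (simp add: sum.distrib sum_distrib_left)
  finally show "(2/3) * (\<Sum>t<T. (1/2 - p t) * (of_bool (x t) - p t)) \<le> (\<Sum>t<T. \<bar>p t - q t\<bar>)"
    by linarith
qed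

section \<open>Expectations over a play\<close>

lemma expectation_bind_pmf_finite:
  fixes g :: "'b \<Rightarrow> real"
  assumes "finite (set_pmf N)" and "\<And>x. x \<in> set_pmf N \<Longrightarrow> finite (set_pmf (f x))"
  shows "measure_pmf.expectation (N \<bind> f) g =
         measure_pmf.expectation N (\<lambda>x. measure_pmf.expectation (f x) g)"
  using assms by (simp add: pmf_expectation_bind[of "set_pmf N"] integral_measure_pmf[of "set_pmf N"])

lemma finite_set_pmf_play: "finite (set_pmf (play A F n))"
proof (induction n)
  case (Suc n)
  have "finite (set_pmf (bernoulli_pmf p))" for p
    by (rule finite_subset[of _ UNIV]) auto
  with Suc show ?case
    by auto
qed simp

lemma integrable_play [simp]: "integrable (measure_pmf (play A F n)) (f :: history \<Rightarrow> real)"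
  by (rule integrable_measure_pmf_finite[OF finite_set_pmf_play])

lemma expectation_play_mono:
  fixes f g :: "history \<Rightarrow> real"
  assumes "\<And>h. h \<in> set_pmf (play A F n) \<Longrightarrow> f h \<le> g h"
  shows "measure_pmf.expectation (play A F n) f \<le> measure_pmf.expectation (play A F n) g"
  using assms by (intro integral_mono_AE) (auto simp: AE_measure_pmf_iff)

lemma expectation_play_martingale:
  fixes \<Phi> :: "history \<Rightarrow> real"
  assumes "\<And>h. measure_pmf.expectation (bernoulli_pmf (A h)) (\<lambda>b. \<Phi> (h @ [(b, F h)])) = \<Phi> h"
  shows "measure_pmf.expectation (play A F n) \<Phi> = \<Phi> []"
proof (induction n)
  case (Suc n)
  have "measure_pmf.expectation (play A F (Suc n)) \<Phi> =
     measure_pmf.expectation (play A F n)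
       (\<lambda>h. measure_pmf.expectation (map_pmf (\<lambda>b. h @ [(b, F h)]) (bernoulli_pmf (A h))) \<Phi>)"
    unfolding play.simps
    by (rule expectation_bind_pmf_finite) (auto simp: finite_set_pmf_play)
  with Suc assms show ?case
    by simp
qed simp

lemma set_pmf_play:
  assumes "h \<in> set_pmf (play A F n)"
  shows "length h = n \<and>
    (\<forall>i<n. snd (h ! i) = F (take i h) \<and> fst (h ! i) \<in> set_pmf (bernoulli_pmf (A (take i h))))"
  using assms
proof (induction n arbitrary: h)
  case (Suc n)
  then obtain g b where g: "g \<in> set_pmf (play A F n)" and "b \<in> set_pmf (bernoulli_pmf (A g))"
    and "h = g @ [(b, F g)]"
    by auto
  with Suc.IH[OF g] show ?case
    by (auto simp: nth_append less_Suc_eq)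
qed simp

lemma expectation_play_length:
  "measure_pmf.expectation (play A F n) (\<lambda>h. f h (length h) :: real) =
   measure_pmf.expectation (play A F n) (\<lambda>h. f h n)"
  by (intro integral_cong_AE) (auto simp: AE_measure_pmf_iff dest: set_pmf_play)

section \<open>The threshold adversary\<close>

definition outcome :: "history \<Rightarrow> nat \<Rightarrow> real" where
  "outcome h i = of_bool (fst (h ! i))"

definition forecast :: "history \<Rightarrow> nat \<Rightarrow> real" where
  "forecast h i = snd (h ! i)"

definition bias :: "history \<Rightarrow> nat \<Rightarrow> real" where
  "bias h n = (\<Sum>i<n. outcome h i - forecast h i)"

definition active :: "real \<Rightarrow> history \<Rightarrow> nat \<Rightarrow> bool" where
  "active K h n \<longleftrightarrow> (\<forall>j\<le>n. \<bar>bias h j\<bar> < K)"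

definition threshold_adversary :: "real \<Rightarrow> history \<Rightarrow> real" where
  "threshold_adversary K h =
     (if active K h (length h) then 1/2 else if 0 < bias h (length h) then 1 else 0)"

definition stopped_bias :: "real \<Rightarrow> history \<Rightarrow> nat \<Rightarrow> real" where
  "stopped_bias K h n = (\<Sum>s<n. of_bool (active K h s) * (outcome h s - forecast h s))"

(* Conditional expectation of the increment of the squared stopped bias under a fair coin. *)
definition stopped_bias_compensator :: "real \<Rightarrow> history \<Rightarrow> nat \<Rightarrow> real" where
  "stopped_bias_compensator K h n = (\<Sum>s<n. of_bool (active K h s) *
     (1/4 + 2 * stopped_bias K h s * (1/2 - forecast h s) + (1/2 - forecast h s)\<^sup>2))"

definition forecast_noise :: "real \<Rightarrow> history \<Rightarrow> nat \<Rightarrow> real" where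
  "forecast_noise K h n =
     (\<Sum>s<n. of_bool (active K h s) * ((1/2 - forecast h s) * (outcome h s - 1/2)))"

definition forecast_deviation :: "real \<Rightarrow> history \<Rightarrow> nat \<Rightarrow> real" where
  "forecast_deviation K h n = (\<Sum>s<n. of_bool (active K h s) * (1/2 - forecast h s)\<^sup>2)"

definition inactive_drift :: "real \<Rightarrow> history \<Rightarrow> nat \<Rightarrow> real" where
  "inactive_drift K h n = (\<Sum>s<n. of_bool (\<not> active K h s) * \<bar>outcome h s - forecast h s\<bar>)"

lemma threshold_adversary_range: "0 \<le> threshold_adversary K h \<and> threshold_adversary K h \<le> 1"
  by (simp add: threshold_adversary_def)

lemma active_mono: "active K h n \<Longrightarrow> m \<le> n \<Longrightarrow> active K h m"
  by (auto simp: active_def)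

lemma outcome_0_or_1: "outcome h i = 0 \<or> outcome h i = 1"
  by (simp add: outcome_def)

lemma bias_Suc: "bias h (Suc n) = bias h n + (outcome h n - forecast h n)"
  by (simp add: bias_def)

lemma stopped_bias_Suc:
  "stopped_bias K h (Suc n) = stopped_bias K h n + of_bool (active K h n) * (outcome h n - forecast h n)"
  by (simp add: stopped_bias_def)

lemma stopped_bias_eq_bias: "active K h n \<Longrightarrow> stopped_bias K h n = bias h n"
  unfolding stopped_bias_def bias_def by (intro sum.cong refl) (auto intro: active_mono)

lemma bias_take: "j \<le> i \<Longrightarrow> bias (take i h) j = bias h j"
  unfolding bias_def by (intro sum.cong refl) (auto simp: outcome_def forecast_def)

lemma active_take: "j \<le> i \<Longrightarrow> active K (take i h) j = active K h j"
  by (simp add: active_def bias_take)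

lemma active_append: "n \<le> length h \<Longrightarrow> active K (h @ y) n = active K h n"
  using active_take[of n "length h" K "h @ y"] by simp

lemma stopped_bias_append: "n \<le> length h \<Longrightarrow> stopped_bias K (h @ y) n = stopped_bias K h n"
  unfolding stopped_bias_def
  by (intro sum.cong refl) (simp add: active_append outcome_def forecast_def nth_append)

lemma forecast_noise_snoc:
  "forecast_noise K (h @ [(b, p)]) (Suc (length h)) = forecast_noise K h (length h) +
     of_bool (active K h (length h)) * ((1/2 - p) * (of_bool b - 1/2))"
proof -
  have "forecast_noise K (h @ [(b, p)]) (length h) = forecast_noise K h (length h)"
    unfolding forecast_noise_def
    by (intro sum.cong refl) (auto simp: outcome_def forecast_def nth_append active_append)
  then show ?thesis
    by (simp add: forecast_noise_def active_append outcome_def forecast_def)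
qed

lemma stopped_bias_snoc:
  "stopped_bias K (h @ [(b, p)]) (Suc (length h)) = stopped_bias K h (length h) +
     of_bool (active K h (length h)) * (of_bool b - p)"
  by (simp add: stopped_bias_Suc stopped_bias_append active_append outcome_def forecast_def)

lemma stopped_bias_compensator_snoc:
  "stopped_bias_compensator K (h @ [(b, p)]) (Suc (length h)) =
     stopped_bias_compensator K h (length h) + of_bool (active K h (length h)) *
       (1/4 + 2 * stopped_bias K h (length h) * (1/2 - p) + (1/2 - p)\<^sup>2)"
proof -
  have "stopped_bias_compensator K (h @ [(b, p)]) (length h) = stopped_bias_compensator K h (length h)"
    unfolding stopped_bias_compensator_def
    by (intro sum.cong refl)
      (auto simp: forecast_def nth_append active_append stopped_bias_append)
  then show ?thesis
    by (simp add: stopped_bias_compensator_def active_append forecast_def stopped_bias_append)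
qed

lemma expectation_forecast_noise:
  "measure_pmf.expectation (play (threshold_adversary K) F n)
     (\<lambda>h. forecast_noise K h (length h)) = 0"
proof -
  have "measure_pmf.expectation (play (threshold_adversary K) F n)
      (\<lambda>h. forecast_noise K h (length h)) = forecast_noise K [] (length ([] :: history))"
    by (rule expectation_play_martingale)
      (use threshold_adversary_range in
        \<open>auto simp: forecast_noise_snoc threshold_adversary_def algebra_simps\<close>)
  then show ?thesis
    by (simp add: forecast_noise_def)
qed

lemma expectation_stopped_bias_sq_minus_compensator:
  "measure_pmf.expectation (play (threshold_adversary K) F n)
     (\<lambda>h. (stopped_bias K h (length h))\<^sup>2 - stopped_bias_compensator K h (length h)) = 0"
proof -
  have "measure_pmf.expectation (play (threshold_adversary K) F n)
      (\<lambda>h. (stopped_bias K h (length h))\<^sup>2 - stopped_bias_compensator K h (length h))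
      = (stopped_bias K [] (length ([] :: history)))\<^sup>2
        - stopped_bias_compensator K [] (length ([] :: history))"
    by (rule expectation_play_martingale)
      (use threshold_adversary_range in \<open>auto simp: stopped_bias_snoc
        stopped_bias_compensator_snoc threshold_adversary_def algebra_simps power2_eq_square\<close>)
  then show ?thesis
    by (simp add: stopped_bias_def stopped_bias_compensator_def)
qed

lemma active_steps_ge:
  "real T * of_bool (active K h T) \<le> (\<Sum>s<T. of_bool (active K h s) :: real)"
proof (cases "active K h T")
  case True
  then have "(\<Sum>s<T. of_bool (active K h s) :: real) = (\<Sum>s<T. 1)"
    by (intro sum.cong refl) (auto intro: active_mono)
  then show ?thesis
    using True by simp
qed (simp add: sum_nonneg)

lemma compensator_increment_ge:
  fixes u K d :: real
  assumes "\<bar>u\<bar> < K"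
  shows "1/8 - 8 * K\<^sup>2 * d\<^sup>2 \<le> 1/4 + 2 * u * d + d\<^sup>2"
proof -
  have "\<bar>2 * u * d\<bar> \<le> 2 * K * \<bar>d\<bar>"
    using assms by (simp add: abs_mult mult_right_mono)
  moreover have "2 * K * \<bar>d\<bar> \<le> 8 * K\<^sup>2 * d\<^sup>2 + 1/8"
  proof -
    have "0 \<le> (8 * K * \<bar>d\<bar> - 1)\<^sup>2"
      by simp
    then show ?thesis
      by (simp add: power2_eq_square algebra_simps abs_mult_self_eq)
  qed
  moreover have "0 \<le> d\<^sup>2"
    by simp
  ultimately show ?thesis
    by linarith
qed

locale threshold_history =
  fixes K :: real and h :: history and T :: nat
  assumes K_pos: "0 < K"
    and forecast_range: "\<And>i. i < T \<Longrightarrow> 0 \<le> forecast h i \<and> forecast h i \<le> 1"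
    and outcome_inactive: "\<And>i. i < T \<Longrightarrow> \<not> active K h i \<Longrightarrow> outcome h i = of_bool (0 < bias h i)"
begin

lemma abs_increment_le_1: "i < T \<Longrightarrow> \<bar>outcome h i - forecast h i\<bar> \<le> 1"
  using forecast_range[of i] outcome_0_or_1[of h i] by auto

lemma abs_stopped_bias_le: "n \<le> T \<Longrightarrow> \<bar>stopped_bias K h n\<bar> \<le> K + 1"
proof (induction n)
  case (Suc n)
  show ?case
  proof (cases "active K h n")
    case True
    then have "\<bar>bias h n\<bar> < K" "stopped_bias K h (Suc n) = bias h n + (outcome h n - forecast h n)"
      by (simp_all add: active_def stopped_bias_Suc stopped_bias_eq_bias)
    with abs_increment_le_1[of n] Suc.prems show ?thesis
      by linarith
  qed (use Suc in \<open>simp add: stopped_bias_Suc\<close>)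
qed (use K_pos in \<open>simp add: stopped_bias_def\<close>)

lemma stopped_bias_sq_le: "(stopped_bias K h T)\<^sup>2 \<le> (K + 1)\<^sup>2"
  using abs_stopped_bias_le[of T] K_pos by (simp add: abs_le_square_iff[symmetric])

(* After leaving the band, every step moves the bias away from 0 by |x - p|. *)
lemma inactive_drift_eq:
  "n \<le> T \<Longrightarrow> \<not> active K h n \<Longrightarrow>
     K \<le> \<bar>bias h n\<bar> \<and> inactive_drift K h n = \<bar>bias h n\<bar> - \<bar>stopped_bias K h n\<bar>"
proof (induction n)
  case 0
  then show ?case
    using K_pos by (simp add: active_def bias_def)
next
  case (Suc n)
  have drift_Suc: "inactive_drift K h (Suc n) =
      inactive_drift K h n + of_bool (\<not> active K h n) * \<bar>outcome h n - forecast h n\<bar>"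
    by (simp add: inactive_drift_def)
  show ?case
  proof (cases "active K h n")
    case True
    have "inactive_drift K h n = 0"
      unfolding inactive_drift_def by (rule sum.neutral) (use True active_mono in auto)
    moreover have "K \<le> \<bar>bias h (Suc n)\<bar>"
      using True Suc.prems by (auto simp: active_def le_Suc_eq)
    ultimately show ?thesis
      using True drift_Suc by (simp add: stopped_bias_Suc stopped_bias_eq_bias bias_Suc)
  next
    case False
    with Suc have IH: "K \<le> \<bar>bias h n\<bar>"
        "inactive_drift K h n = \<bar>bias h n\<bar> - \<bar>stopped_bias K h n\<bar>"
      by auto
    have n: "n < T"
      using Suc.prems by simp
    have "\<bar>bias h (Suc n)\<bar> = \<bar>bias h n\<bar> + \<bar>outcome h n - forecast h n\<bar>"
      using outcome_inactive[OF n False] forecast_range[OF n] IH(1) K_pos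
      by (auto simp: bias_Suc)
    then show ?thesis
      using IH False drift_Suc by (auto simp: stopped_bias_Suc intro: add_increasing2)
  qed
qed

lemma inactive_drift_le_abs_bias: "inactive_drift K h T \<le> \<bar>bias h T\<bar>"
proof (cases "active K h T")
  case True
  then have "inactive_drift K h T = 0"
    unfolding inactive_drift_def by (intro sum.neutral) (auto intro: active_mono)
  then show ?thesis
    by simp
qed (use inactive_drift_eq[of T] in simp)

lemma forecast_deviation_noise_le:
  "forecast_deviation K h T + forecast_noise K h T - inactive_drift K h T / 2
     \<le> (\<Sum>s<T. (1/2 - forecast h s) * (outcome h s - forecast h s))"
proof -
  have "forecast_deviation K h T + forecast_noise K h T - inactive_drift K h T / 2 =
    (\<Sum>s<T. of_bool (active K h s) * (1/2 - forecast h s)\<^sup>2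
        + of_bool (active K h s) * ((1/2 - forecast h s) * (outcome h s - 1/2))
        - of_bool (\<not> active K h s) * \<bar>outcome h s - forecast h s\<bar> / 2)"
    unfolding forecast_deviation_def forecast_noise_def inactive_drift_def
    by (simp only: sum.distrib sum_subtractf sum_divide_distrib)
  also have "\<dots> \<le> (\<Sum>s<T. (1/2 - forecast h s) * (outcome h s - forecast h s))"
  proof (rule sum_mono)
    fix s assume "s \<in> {..<T}"
    then have "0 \<le> forecast h s" "forecast h s \<le> 1"
      using forecast_range by auto
    then have "(1/2 - forecast h s) * (outcome h s - forecast h s)
        + \<bar>outcome h s - forecast h s\<bar> / 2 = (outcome h s - forecast h s)\<^sup>2"
      using outcome_0_or_1[of h s] by (auto simp: power2_eq_square field_simps)
    then have "- (\<bar>outcome h s - forecast h s\<bar> / 2)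
        \<le> (1/2 - forecast h s) * (outcome h s - forecast h s)"
      using zero_le_power2[of "outcome h s - forecast h s"] by linarith
    then show "of_bool (active K h s) * (1/2 - forecast h s)\<^sup>2
        + of_bool (active K h s) * ((1/2 - forecast h s) * (outcome h s - 1/2))
        - of_bool (\<not> active K h s) * \<bar>outcome h s - forecast h s\<bar> / 2
        \<le> (1/2 - forecast h s) * (outcome h s - forecast h s)"
      by (cases "active K h s") (auto simp: power2_eq_square algebra_simps)
  qed
  finally show ?thesis .
qed

lemma stopped_bias_compensator_ge:
  "real T * of_bool (active K h T) / 8 - 8 * K\<^sup>2 * forecast_deviation K h T
     \<le> stopped_bias_compensator K h T"
proof -
  have "(\<Sum>s<T. of_bool (active K h s)) / 8 - 8 * K\<^sup>2 * forecast_deviation K h T =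
        (\<Sum>s<T. of_bool (active K h s) * (1/8 - 8 * K\<^sup>2 * (1/2 - forecast h s)\<^sup>2))"
    unfolding forecast_deviation_def sum_divide_distrib sum_distrib_left sum_subtractf[symmetric]
    by (intro sum.cong refl) (simp add: algebra_simps)
  also have "\<dots> \<le> stopped_bias_compensator K h T"
    unfolding stopped_bias_compensator_def
  proof (rule sum_mono)
    fix s
    show "of_bool (active K h s) * (1/8 - 8 * K\<^sup>2 * (1/2 - forecast h s)\<^sup>2)
      \<le> of_bool (active K h s) *
          (1/4 + 2 * stopped_bias K h s * (1/2 - forecast h s) + (1/2 - forecast h s)\<^sup>2)"
      using compensator_increment_ge[of "stopped_bias K h s" K "1/2 - forecast h s"]
      by (auto simp: stopped_bias_eq_bias active_def)
  qed
  finally show ?thesis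
    using active_steps_ge[of T K h] by linarith
qed

lemma
  shows abs_bias_le_CalDist: "\<bar>bias h T\<bar> \<le> CalDist T (\<lambda>t. fst (h ! t)) (\<lambda>t. snd (h ! t))"
    and weighted_bias_le_CalDist: "(2/3) * (\<Sum>s<T. (1/2 - forecast h s) * (outcome h s - forecast h s))
      \<le> CalDist T (\<lambda>t. fst (h ! t)) (\<lambda>t. snd (h ! t))"
  using abs_sum_bias_le_CalDist[where T = T and x = "\<lambda>t. fst (h ! t)" and p = "\<lambda>t. snd (h ! t)"]
    weighted_sum_bias_le_CalDist[where T = T and x = "\<lambda>t. fst (h ! t)" and p = "\<lambda>t. snd (h ! t)"]
    forecast_range
  by (simp_all add: bias_def outcome_def forecast_def)

lemma escape_le_CalDist:
  "K * (1 - of_bool (active K h T)) \<le> CalDist T (\<lambda>t. fst (h ! t)) (\<lambda>t. snd (h ! t))"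
  using abs_bias_le_CalDist inactive_drift_eq[of T]
  by (cases "active K h T") simp_all

lemma forecast_deviation_noise_le_CalDist:
  "forecast_deviation K h T + forecast_noise K h T \<le> 2 * CalDist T (\<lambda>t. fst (h ! t)) (\<lambda>t. snd (h ! t))"
  using forecast_deviation_noise_le inactive_drift_le_abs_bias abs_bias_le_CalDist
    weighted_bias_le_CalDist
  by linarith

end

lemma threshold_history_play:
  assumes F: "\<And>h. 0 \<le> F h \<and> F h \<le> 1" and K: "0 < K"
    and h: "h \<in> set_pmf (play (threshold_adversary K) F T)"
  shows "threshold_history K h T" "length h = T"
proof -
  note play = set_pmf_play[OF h]
  show "length h = T"
    using play by simp
  show "threshold_history K h T"
  proof
    fix i assume i: "i < T" and "\<not> active K h i"
    then have "threshold_adversary K (take i h) = of_bool (0 < bias h i)"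
      using play by (simp add: threshold_adversary_def active_take bias_take)
    then have "fst (h ! i) \<in> set_pmf (bernoulli_pmf (of_bool (0 < bias h i)))"
      using play i by metis
    then show "outcome h i = of_bool (0 < bias h i)"
      by (cases "0 < bias h i"; cases "fst (h ! i)") (auto simp: outcome_def set_pmf_iff)
  qed (use K F play in \<open>auto simp: forecast_def\<close>)
qed

lemma lower_bound_from_moments:
  fixes K e v \<alpha> T :: real
  assumes K: "128 \<le> K" and "K * (1 - \<alpha>) \<le> e" and "v \<le> 2 * e"
    and "T * \<alpha> / 8 - 8 * K\<^sup>2 * v \<le> (K + 1)\<^sup>2" and "T = K ^ 3"
  shows "K / 512 \<le> e"
proof (rule ccontr)
  assume "\<not> K / 512 \<le> e"
  have "0 < K"
    using K by simp
  have cube: "K ^ 3 = K\<^sup>2 * K"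
    by (simp add: power2_eq_square power3_eq_cube)
  have "K * (1 - \<alpha>) < K * (1/512)"
    using assms(2) \<open>\<not> K / 512 \<le> e\<close> by simp
  then have "K ^ 3 * (511/512) \<le> K ^ 3 * \<alpha>"
    using \<open>0 < K\<close> by (intro mult_left_mono) simp_all
  moreover have "K\<^sup>2 * v \<le> K ^ 3 / 256"
    using assms(3) \<open>\<not> K / 512 \<le> e\<close> mult_left_mono[of v "K / 256" "K\<^sup>2"]
    by (simp add: cube)
  moreover have "K\<^sup>2 * 128 \<le> K ^ 3" "K * 128 \<le> K\<^sup>2"
    using K by (simp_all add: cube power2_eq_square mult_left_mono)
  moreover have "K ^ 3 * \<alpha> / 8 - 8 * (K\<^sup>2 * v) \<le> K\<^sup>2 + 2 * K + 1"
    using assms(4,5) by (simp add: power2_sum)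
  ultimately show False
    using K by linarith
qed

context
  fixes K :: real and F :: "history \<Rightarrow> real" and T :: nat
  assumes F: "\<And>h. 0 \<le> F h \<and> F h \<le> 1" and K_pos: "0 < K"
begin

lemma expectation_threshold_play_mono:
  fixes f g :: "history \<Rightarrow> real"
  assumes "\<And>h. threshold_history K h T \<Longrightarrow> f h \<le> g h"
  shows "measure_pmf.expectation (play (threshold_adversary K) F T) f
    \<le> measure_pmf.expectation (play (threshold_adversary K) F T) g"
  using assms threshold_history_play[OF F K_pos] by (intro expectation_play_mono) auto

lemma escape_le_expected_caldist:
  "K * (1 - measure_pmf.expectation (play (threshold_adversary K) F T) (\<lambda>h. of_bool (active K h T)))
     \<le> expected_caldist (threshold_adversary K) F T"
proof -
  have "K * (1 - measure_pmf.expectation (play (threshold_adversary K) F T) (\<lambda>h. of_bool (active K h T)))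
      = measure_pmf.expectation (play (threshold_adversary K) F T) (\<lambda>h. K * (1 - of_bool (active K h T)))"
    by simp
  also have "\<dots> \<le> expected_caldist (threshold_adversary K) F T"
    unfolding expected_caldist_def
    by (intro expectation_threshold_play_mono threshold_history.escape_le_CalDist)
  finally show ?thesis .
qed

lemma expectation_forecast_deviation_le:
  "measure_pmf.expectation (play (threshold_adversary K) F T) (\<lambda>h. forecast_deviation K h T)
     \<le> 2 * expected_caldist (threshold_adversary K) F T"
proof -
  have "measure_pmf.expectation (play (threshold_adversary K) F T) (\<lambda>h. forecast_deviation K h T)
    = measure_pmf.expectation (play (threshold_adversary K) F T)
        (\<lambda>h. forecast_deviation K h T + forecast_noise K h T)"
    using expectation_forecast_noise[of K F T] expectation_play_length[of _ F T "forecast_noise K"]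
    by simp
  also have "\<dots> \<le> measure_pmf.expectation (play (threshold_adversary K) F T)
      (\<lambda>h. 2 * CalDist T (\<lambda>t. fst (h ! t)) (\<lambda>t. snd (h ! t)))"
    by (intro expectation_threshold_play_mono threshold_history.forecast_deviation_noise_le_CalDist)
  finally show ?thesis
    by (simp add: expected_caldist_def)
qed

lemma expectation_forecast_deviation_ge:
  "real T * measure_pmf.expectation (play (threshold_adversary K) F T) (\<lambda>h. of_bool (active K h T)) / 8
     - 8 * K\<^sup>2 * measure_pmf.expectation (play (threshold_adversary K) F T) (\<lambda>h. forecast_deviation K h T)
   \<le> (K + 1)\<^sup>2"
proof -
  have "real T * measure_pmf.expectation (play (threshold_adversary K) F T) (\<lambda>h. of_bool (active K h T)) / 8
     - 8 * K\<^sup>2 * measure_pmf.expectation (play (threshold_adversary K) F T) (\<lambda>h. forecast_deviation K h T)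
    = measure_pmf.expectation (play (threshold_adversary K) F T)
        (\<lambda>h. real T * of_bool (active K h T) / 8 - 8 * K\<^sup>2 * forecast_deviation K h T)"
    by simp
  also have "\<dots> \<le> measure_pmf.expectation (play (threshold_adversary K) F T)
      (\<lambda>h. stopped_bias_compensator K h T)"
    by (intro expectation_threshold_play_mono threshold_history.stopped_bias_compensator_ge)
  also have "\<dots> = measure_pmf.expectation (play (threshold_adversary K) F T) (\<lambda>h. (stopped_bias K h T)\<^sup>2)"
    using expectation_stopped_bias_sq_minus_compensator[of K F T]
      expectation_play_length[of _ F T "\<lambda>h n. (stopped_bias K h n)\<^sup>2 - stopped_bias_compensator K h n"]
    by simp
  also have "\<dots> \<le> measure_pmf.expectation (play (threshold_adversary K) F T) (\<lambda>_. (K + 1)\<^sup>2)"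
    by (intro expectation_threshold_play_mono threshold_history.stopped_bias_sq_le)
  finally show ?thesis
    by simp
qed

end

lemma expected_caldist_threshold_adversary_ge:
  assumes F: "\<And>h. 0 \<le> F h \<and> F h \<le> 1" and K: "128 \<le> K" and T: "real T = K ^ 3"
  shows "K / 512 \<le> expected_caldist (threshold_adversary K) F T"
proof -
  have "0 < K"
    using K by simp
  note moments = escape_le_expected_caldist[OF F \<open>0 < K\<close>]
    expectation_forecast_deviation_le[OF F \<open>0 < K\<close>]
    expectation_forecast_deviation_ge[OF F \<open>0 < K\<close>]
  show ?thesis
    using lower_bound_from_moments[OF K moments T] .
qed

theorem theorem4:
  shows "\<exists>c>0. \<exists>T0::nat. \<forall>T\<ge>T0. \<exists>A :: history \<Rightarrow> real.
     (\<forall>h. 0 \<le> A h \<and> A h \<le> 1) \<and>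
     (\<forall>(M :: real measure) (F :: real \<Rightarrow> history \<Rightarrow> real).
        prob_space M \<and> (\<forall>\<omega> h. 0 \<le> F \<omega> h \<and> F \<omega> h \<le> 1) \<longrightarrow>
        (\<integral>\<^sup>+ \<omega>. ennreal (expected_caldist A (F \<omega>) T) \<partial>M)
          \<ge> ennreal (c * real T powr (1/3)))"
proof (intro exI[of _ "1/512"] exI[of _ "128 ^ 3"] conjI allI impI)
  fix T :: nat assume T: "128 ^ 3 \<le> T"
  define K where "K = real T powr (1/3)"
  have KT: "real T = K ^ 3"
    using T by (simp add: K_def powr_power)
  have "(128::real) ^ 3 \<le> K ^ 3"
    using T unfolding KT[symmetric] by (metis of_nat_le_iff of_nat_numeral of_nat_power)
  then have K: "128 \<le> K"
    using power_mono_iff[of 128 K 3] by (simp add: K_def)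
  show "\<exists>A. (\<forall>h. 0 \<le> A h \<and> A h \<le> 1) \<and>
     (\<forall>(M :: real measure) (F :: real \<Rightarrow> history \<Rightarrow> real).
        prob_space M \<and> (\<forall>\<omega> h. 0 \<le> F \<omega> h \<and> F \<omega> h \<le> 1) \<longrightarrow>
        (\<integral>\<^sup>+ \<omega>. ennreal (expected_caldist A (F \<omega>) T) \<partial>M) \<ge> ennreal (1/512 * real T powr (1/3)))"
  proof (intro exI[of _ "threshold_adversary K"] conjI allI impI)
    fix M :: "real measure" and F :: "real \<Rightarrow> history \<Rightarrow> real"
    assume M: "prob_space M \<and> (\<forall>\<omega> h. 0 \<le> F \<omega> h \<and> F \<omega> h \<le> 1)"
    then have "ennreal (1/512 * real T powr (1/3)) = (\<integral>\<^sup>+\<omega>. ennreal (K / 512) \<partial>M)"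
      by (simp add: K_def nn_integral_const prob_space.emeasure_space_1)
    also have "\<dots> \<le> (\<integral>\<^sup>+\<omega>. ennreal (expected_caldist (threshold_adversary K) (F \<omega>) T) \<partial>M)"
      using M by (intro nn_integral_mono ennreal_leI expected_caldist_threshold_adversary_ge K KT) auto
    finally show "ennreal (1/512 * real T powr (1/3))
        \<le> (\<integral>\<^sup>+\<omega>. ennreal (expected_caldist (threshold_adversary K) (F \<omega>) T) \<partial>M)" .
  qed (simp_all add: threshold_adversary_def)
qed simp

end
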